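(* For $\varepsilon\in(0,1)$ and $d\in\mathbb{N}$ we have $$N_2^{\rm per}(\varepsilon,d)\ge\frac{1}{1+\varepsilon^2}\left(\frac32\right)^d\quad\text{and}\quad N_2^{\rm per,w+}(\varepsilon,d)\ge(1-\varepsilon^2)\left(\frac32\right)^d.$$ Moreover, for any $\varepsilon_0\in(0,1)$ there exists $c>0$ such that $N_2^{\rm per,w}(\varepsilon,d)\ge c\,1.0628^d$ for all $d\in\mathbb{N}$ and all $\varepsilon\in(0,\varepsilon_0)$.
   Context: For $x,y\in[0,1)$ define $I(x,y)=[x,y)$ if $x\le y$ and $I(x,y)=[0,y)\cup[x,1)$ if $x>y$; for $\boldsymbol{x},\boldsymbol{y}\in[0,1)^d$ let $B(\boldsymbol{x},\boldsymbol{y})=I(x_1,y_1)\times\cdots\times I(x_d,y_d)$. For a point set $\mathcal{P}=\{\boldsymbol{x}_1,\ldots,\boldsymbol{x}_N\}\subset[0,1)^d$ with real weights $\boldsymbol{w}=(w_1,\ldots,w_N)$, let $\Delta_{\mathcal{P}}(B,\boldsymbol{w})=\sum_{j:\boldsymbol{x}_j\in B}w_j-\mathrm{volume}(B)$ and $L_{2,N}^{\rm per}(\mathcal{P},\boldsymbol{w})=\big(\int_{[0,1]^d}\int_{[0,1]^d}\Delta_{\mathcal{P}}(B(\boldsymbol{x},\boldsymbol{y}),\boldsymbol{w})^2\,{\rm d}\boldsymbol{x}\,{\rm d}\boldsymbol{y}\big)^{1/2}$; write $L_{2,N}^{\rm per}(\mathcal{P})$ for equal weights $w_j=1/N$. Define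 $N_2^{\rm per}(\varepsilon,d)=\min\{N\in\mathbb{N}:\exists\,\mathcal{P}\subseteq[0,1)^d,\ |\mathcal{P}|=N,\ L_{2,N}^{\rm per}(\mathcal{P})\le\varepsilon\,3^{-d/2}\}$; $N_2^{\rm per,w}(\varepsilon,d)$ is defined in the same way but with the minimum over all $N$ for which there exist an $N$-point set $\mathcal{P}$ and arbitrary real weights $\boldsymbol{w}$ with $L_{2,N}^{\rm per}(\mathcal{P},\boldsymbol{w})\le\varepsilon\,3^{-d/2}$; and $N_2^{\rm per,w+}(\varepsilon,d)$ is defined in the same way with only positive weights allowed. (Here $3^{-d/2}$ is the periodic $L_2$-discrepancy of the empty point set.) *)

theory Defs
  imports "HOL-Analysis.Analysis"
begin

definition in_perI :: "real \<Rightarrow> real \<Rightarrow> real \<Rightarrow> bool" where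
  "in_perI x y t = (if x \<le> y then x \<le> t \<and> t < y
                    else (0 \<le> t \<and> t < y) \<or> (x \<le> t \<and> t < 1))"

definition len_perI :: "real \<Rightarrow> real \<Rightarrow> real" where
  "len_perI x y = (if x \<le> y then y - x else 1 - x + y)"

definition in_perB :: "nat \<Rightarrow> (nat \<Rightarrow> real) \<Rightarrow> (nat \<Rightarrow> real) \<Rightarrow> (nat \<Rightarrow> real) \<Rightarrow> bool" where
  "in_perB d x y p = (\<forall>i<d. in_perI (x i) (y i) (p i))"

definition vol_perB :: "nat \<Rightarrow> (nat \<Rightarrow> real) \<Rightarrow> (nat \<Rightarrow> real) \<Rightarrow> real" where
  "vol_perB d x y = (\<Prod>i<d. len_perI (x i) (y i))"

text \<open>Local discrepancy of the weighted point set P_0,...,P_{N-1} (P j i = i-th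
  coordinate of the j-th point) with weights w on the box B(x,y).\<close>
definition disc_perB ::
  "nat \<Rightarrow> nat \<Rightarrow> (nat \<Rightarrow> nat \<Rightarrow> real) \<Rightarrow> (nat \<Rightarrow> real) \<Rightarrow> (nat \<Rightarrow> real) \<Rightarrow> (nat \<Rightarrow> real) \<Rightarrow> real" where
  "disc_perB d N P w x y = (\<Sum>j<N. if in_perB d x y (P j) then w j else 0) - vol_perB d x y"

definition unit_cube :: "nat \<Rightarrow> (nat \<Rightarrow> real) measure" where
  "unit_cube d = PiM {..<d} (\<lambda>_. restrict_space lborel {0..1::real})"

definition L2per :: "nat \<Rightarrow> nat \<Rightarrow> (nat \<Rightarrow> nat \<Rightarrow> real) \<Rightarrow> (nat \<Rightarrow> real) \<Rightarrow> real" where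
  "L2per d N P w = sqrt (\<integral>x. (\<integral>y. (disc_perB d N P w x y)\<^sup>2 \<partial>unit_cube d) \<partial>unit_cube d)"

definition point_set_in :: "nat \<Rightarrow> nat \<Rightarrow> (nat \<Rightarrow> nat \<Rightarrow> real) \<Rightarrow> bool" where
  "point_set_in d N P = (\<forall>j<N. \<forall>i<d. 0 \<le> P j i \<and> P j i < 1)"

definition N2per :: "real \<Rightarrow> nat \<Rightarrow> nat" where
  "N2per \<epsilon> d = (LEAST N. 1 \<le> N \<and> (\<exists>P. point_set_in d N P \<and>
       L2per d N P (\<lambda>_. 1 / real N) \<le> \<epsilon> * 3 powr (- real d / 2)))"

definition N2per_w :: "real \<Rightarrow> nat \<Rightarrow> nat" where
  "N2per_w \<epsilon> d = (LEAST N. 1 \<le> N \<and> (\<exists>P w. point_set_in d N P \<and>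
       L2per d N P w \<le> \<epsilon> * 3 powr (- real d / 2)))"

definition N2per_wpos :: "real \<Rightarrow> nat \<Rightarrow> nat" where
  "N2per_wpos \<epsilon> d = (LEAST N. 1 \<le> N \<and> (\<exists>P w. point_set_in d N P \<and> (\<forall>j<N. 0 < w j) \<and>
       L2per d N P w \<le> \<epsilon> * 3 powr (- real d / 2)))"

end

theory Submission
  imports Defs "HOL-Real_Asymp.Real_Asymp"
begin

text \<open>
  Integrating the squared local discrepancy one coordinate at a time gives a Warnock-type formula:
  the squared periodic L2 discrepancy is Q - 2 (sum w) / 3^d + 1 / 3^d, where Q is the quadratic
  form in the weights of the matrix prod_i k(x_ji, x_ki), with k(s, t) = 1/2 - |s - t| + (s - t)^2.
  A bound Q >= (sum w)^2 / (N B) then forces N B >= (1 - eps^2) 3^d, by minimising over sum w.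
  For positive weights B = 2^d, because k >= 0 and k(s, s) = 1/2. For arbitrary weights the
  kernels M = 57/100 + 3/10 (k - 1/3) and k - M^2 are positive semidefinite, and Vybiral's
  inequality (sum_j w_j M_jj)^2 <= N sum_jk w_j w_k M_jk^2 gives B = (2500/961)^d, that is
  N >= (1 - eps^2) 1.1532^d. Here k - 1/3 = B_2({s - t}) is positive semidefinite by the
  one-dimensional case of the formula itself, and -B_4({s - t}) = 1/180 + (k - 1/3)/3 - (k - 1/3)^2
  is a Gram kernel of the periodic Bernoulli polynomial B_2. Grids show that the minima defining
  the three inverse discrepancies are taken over nonempty sets.
\<close>

section \<open>Integration over the unit cube\<close>

abbreviation unit_interval :: "real measure" where
  "unit_interval \<equiv> restrict_space lborel {0..1}"

lemma finite_measure_unit_interval: "finite_measure unit_interval"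
  by (rule finite_measureI) (simp add: emeasure_restrict_space)

interpretation unit_interval_product: product_sigma_finite "\<lambda>_::nat. unit_interval"
  unfolding product_sigma_finite_def
  using finite_measure_unit_interval finite_measure.axioms(1) by blast

lemma has_bochner_integral_unit_interval:
  fixes g :: "real \<Rightarrow> real"
  assumes "g \<in> borel_measurable borel" and "\<And>x. x \<in> {0..1} \<Longrightarrow> \<bar>g x\<bar> \<le> B"
    and "(g has_integral v) {0..1}"
  shows "has_bochner_integral unit_interval g v"
proof -
  interpret finite_measure unit_interval by (rule finite_measure_unit_interval)
  have int: "integrable unit_interval g"
    using assms(1,2)
    by (intro integrable_const_bound[where B=B]) (auto intro: measurable_restrict_space1 simp: space_restrict_space)
  then have "set_integrable lborel {0..1} g"
    unfolding set_integrable_def by (subst (asm) integrable_restrict_space) auto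
  then have "(LINT x:{0..1}|lborel. g x) = integral {0..1} g"
    by (rule set_borel_integral_eq_integral(2))
  moreover have "(\<integral>x. g x \<partial>unit_interval) = (LINT x:{0..1}|lborel. g x)"
    unfolding set_lebesgue_integral_def by (subst integral_restrict_space) auto
  ultimately show ?thesis
    using int assms(3)
    by (simp add: has_bochner_integral_iff integral_unique)
qed

lemma has_bochner_integral_unit_interval_const: "has_bochner_integral unit_interval (\<lambda>_. c :: real) c"
  using has_integral_const_real[of c 0 1]
  by (intro has_bochner_integral_unit_interval[where B="\<bar>c\<bar>"]) auto

lemma has_bochner_integral_unit_cube_prod:
  fixes f :: "nat \<Rightarrow> real \<Rightarrow> real"
  assumes "\<And>i. i < d \<Longrightarrow> has_bochner_integral unit_interval (f i) (v i)"
  shows "has_bochner_integral (unit_cube d) (\<lambda>x. \<Prod>i<d. f i (x i)) (\<Prod>i<d. v i)"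
proof -
  have int: "\<And>i. i \<in> {..<d} \<Longrightarrow> integrable unit_interval (f i)"
    and val: "\<And>i. i \<in> {..<d} \<Longrightarrow> integral\<^sup>L unit_interval (f i) = v i"
    using assms by (auto simp: has_bochner_integral_iff)
  show ?thesis
    unfolding unit_cube_def has_bochner_integral_iff
    using unit_interval_product.product_integral_prod[of "{..<d}" f, OF _ int]
      unit_interval_product.product_integrable_prod[of "{..<d}" f, OF _ int] val
    by simp
qed

lemma has_integral_interior_antiderivative:
  fixes f g F :: "real \<Rightarrow> real"
  assumes "a \<le> b" and "\<And>x. (F has_real_derivative f x) (at x)"
    and "\<And>x. a < x \<Longrightarrow> x < b \<Longrightarrow> g x = f x" and "F b - F a = v"
  shows "(g has_integral v) {a..b}"
proof -
  have "(f has_integral (F b - F a)) {a..b}"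
    using assms(1,2)
    by (intro fundamental_theorem_of_calculus)
      (auto simp: has_real_derivative_iff_has_vector_derivative[symmetric] intro: has_field_derivative_at_within)
  then show ?thesis
    unfolding assms(4)
    by (rule has_integral_spike_finite[where S="{a,b}", rotated 2]) (auto simp: assms(3))
qed

lemma has_integral_unit_interval_three_pieces:
  fixes g fl fm fr Fl Fm Fr :: "real \<Rightarrow> real"
  assumes "0 \<le> a" "a \<le> b" "b \<le> 1"
    and "\<And>x. (Fl has_real_derivative fl x) (at x)" "\<And>x. 0 < x \<Longrightarrow> x < a \<Longrightarrow> g x = fl x"
    and "\<And>x. (Fm has_real_derivative fm x) (at x)" "\<And>x. a < x \<Longrightarrow> x < b \<Longrightarrow> g x = fm x"
    and "\<And>x. (Fr has_real_derivative fr x) (at x)" "\<And>x. b < x \<Longrightarrow> x < 1 \<Longrightarrow> g x = fr x"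
    and "Fl a - Fl 0 + (Fm b - Fm a) + (Fr 1 - Fr b) = v"
  shows "(g has_integral v) {0..1}"
proof -
  have "(g has_integral (Fl a - Fl 0 + (Fm b - Fm a))) {0..b}"
    using assms(1,2)
    by (intro has_integral_combine[OF _ _ has_integral_interior_antiderivative[OF assms(1,4,5) refl]
          has_integral_interior_antiderivative[OF assms(2,6,7) refl]])
  from has_integral_combine[OF _ _ this has_integral_interior_antiderivative[OF assms(3,8,9) refl]]
  show ?thesis
    using assms(1-3,10) by simp
qed

lemma has_integral_unit_interval_piecewise_const:
  fixes g :: "real \<Rightarrow> real"
  assumes "0 \<le> a" "a \<le> b" "b \<le> 1"
    and "\<And>x. 0 < x \<Longrightarrow> x < a \<Longrightarrow> g x = cl" "\<And>x. a < x \<Longrightarrow> x < b \<Longrightarrow> g x = cm"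
    and "\<And>x. b < x \<Longrightarrow> x < 1 \<Longrightarrow> g x = cr"
  shows "(g has_integral (cl * a + cm * (b - a) + cr * (1 - b))) {0..1}"
  using assms(1-3)
  by (intro has_integral_unit_interval_three_pieces[where Fl="\<lambda>x. cl * x" and fl="\<lambda>_. cl"
        and Fm="\<lambda>x. cm * x" and fm="\<lambda>_. cm" and Fr="\<lambda>x. cr * x" and fr="\<lambda>_. cr"])
    (auto intro!: derivative_eq_intros simp: assms(4-6) algebra_simps)

section \<open>One-dimensional integrals\<close>

definition perI_indicator :: "real \<Rightarrow> real \<Rightarrow> real \<Rightarrow> real" where
  "perI_indicator x y t = (if in_perI x y t then 1 else 0)"

definition len_cover :: "real \<Rightarrow> real \<Rightarrow> real" where
  "len_cover s x = (if x \<le> s then (1 - (s - x)\<^sup>2) / 2 else (x - s) - (x - s)\<^sup>2 / 2)"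

definition joint_cover :: "real \<Rightarrow> real \<Rightarrow> real \<Rightarrow> real" where
  "joint_cover s t x =
     (if x \<le> min s t then 1 + x - max s t else if x \<le> max s t then x - min s t else x - max s t)"

definition kernel_per :: "real \<Rightarrow> real \<Rightarrow> real" where
  "kernel_per s t = 1/2 - \<bar>s - t\<bar> + (s - t)\<^sup>2"

lemma perI_indicator_measurable [measurable]: "(\<lambda>y. perI_indicator x y t) \<in> borel_measurable borel"
  unfolding perI_indicator_def in_perI_def by measurable

lemma len_perI_measurable [measurable]: "len_perI x \<in> borel_measurable borel"
  unfolding len_perI_def by measurable

lemma len_cover_measurable [measurable]: "len_cover s \<in> borel_measurable borel"
  unfolding len_cover_def by measurable

lemma joint_cover_measurable [measurable]: "joint_cover s t \<in> borel_measurable borel"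
  unfolding joint_cover_def by measurable

lemma joint_cover_commute: "joint_cover s t = joint_cover t s"
  by (auto simp: joint_cover_def min_def max_def)

lemma kernel_per_commute: "kernel_per s t = kernel_per t s"
  unfolding kernel_per_def by (simp add: abs_minus_commute power2_commute)

lemma kernel_per_diag: "kernel_per s s = 1/2"
  by (simp add: kernel_per_def)

lemma kernel_per_nonneg: "0 \<le> kernel_per s t"
proof -
  have "kernel_per s t = (\<bar>s - t\<bar> - 1/2)\<^sup>2 + 1/4"
    unfolding kernel_per_def by (simp add: power2_eq_square algebra_simps)
  then show ?thesis by simp
qed

lemma len_perI_bound: "x \<in> {0..1} \<Longrightarrow> y \<in> {0..1} \<Longrightarrow> \<bar>len_perI x y\<bar> \<le> 1"
  by (auto simp: len_perI_def)

lemma has_bochner_integral_len_perI_sq: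
  assumes x: "x \<in> {0..1}"
  shows "has_bochner_integral unit_interval (\<lambda>y. (len_perI x y)\<^sup>2) (1/3)"
proof -
  have left: "((\<lambda>y. (len_perI x y)\<^sup>2) has_integral (1/3 - (1 - x)^3/3)) {0..x}"
    using x
    by (intro has_integral_interior_antiderivative[where F="\<lambda>y. (1 - x + y)^3/3" and f="\<lambda>y. (1 - x + y)\<^sup>2"])
      (auto simp: len_perI_def intro!: derivative_eq_intros simp: power2_eq_square power3_eq_cube)
  have right: "((\<lambda>y. (len_perI x y)\<^sup>2) has_integral (1 - x)^3/3) {x..1}"
    using x
    by (intro has_integral_interior_antiderivative[where F="\<lambda>y. (y - x)^3/3" and f="\<lambda>y. (y - x)\<^sup>2"])
      (auto simp: len_perI_def intro!: derivative_eq_intros simp: power2_eq_square power3_eq_cube)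
  have "((\<lambda>y. (len_perI x y)\<^sup>2) has_integral 1/3) {0..1}"
    using has_integral_combine[OF _ _ left right] x by simp
  moreover have "\<bar>(len_perI x y)\<^sup>2\<bar> \<le> 1" if "y \<in> {0..1}" for y
    using len_perI_bound[OF x that] by (simp add: abs_le_square_iff[where y=1, simplified])
  ultimately show ?thesis
    by (intro has_bochner_integral_unit_interval[where B=1]) auto
qed

lemma has_bochner_integral_len_perI_indicator:
  assumes x: "x \<in> {0..1}" and s: "s \<in> {0..<1}"
  shows "has_bochner_integral unit_interval (\<lambda>y. len_perI x y * perI_indicator x y s) (len_cover s x)"
proof -
  let ?g = "\<lambda>y. len_perI x y * perI_indicator x y s"
  have "(?g has_integral len_cover s x) {0..1}"
  proof (cases "x \<le> s")
    case True
    then show ?thesis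
      using x s
      by (intro has_integral_unit_interval_three_pieces[where a=x and b=s
            and Fl="\<lambda>y. (1 - x + y)\<^sup>2/2" and fl="\<lambda>y. 1 - x + y" and Fm="\<lambda>_. 0" and fm="\<lambda>_. 0"
            and Fr="\<lambda>y. (y - x)\<^sup>2/2" and fr="\<lambda>y. y - x"])
        (auto simp: len_perI_def perI_indicator_def in_perI_def len_cover_def power2_eq_square
          field_simps intro!: derivative_eq_intros)
  next
    case False
    then show ?thesis
      using x s
      by (intro has_integral_unit_interval_three_pieces[where a=s and b=x
            and Fl="\<lambda>_. 0" and fl="\<lambda>_. 0" and Fm="\<lambda>y. (1 - x + y)\<^sup>2/2" and fm="\<lambda>y. 1 - x + y"
            and Fr="\<lambda>_. 0" and fr="\<lambda>_. 0"])
        (auto simp: len_perI_def perI_indicator_def in_perI_def len_cover_def power2_eq_square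
          field_simps intro!: derivative_eq_intros)
  qed
  moreover have "\<bar>?g y\<bar> \<le> 1" if "y \<in> {0..1}" for y
    using len_perI_bound[OF x that] by (simp add: perI_indicator_def)
  ultimately show ?thesis
    by (intro has_bochner_integral_unit_interval[where B=1]) auto
qed

lemma has_integral_perI_indicator_mult_ordered:
  assumes x: "x \<in> {0..1}" and s: "s \<in> {0..<1}" and t: "t \<in> {0..<1}" and st: "s \<le> t"
  shows "((\<lambda>y. perI_indicator x y s * perI_indicator x y t) has_integral joint_cover s t x) {0..1}"
proof -
  consider "x \<le> s" | "s < x" "x \<le> t" | "t < x" by linarith
  then show ?thesis
  proof cases
    case 1
    then show ?thesis
      using x s t st
      by (intro has_integral_eq_rhs[OF has_integral_unit_interval_piecewise_const[where a=x and b=t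
            and cl=1 and cm=0 and cr=1]])
        (auto simp: perI_indicator_def in_perI_def joint_cover_def)
  next
    case 2
    then show ?thesis
      using x s t st
      by (intro has_integral_eq_rhs[OF has_integral_unit_interval_piecewise_const[where a=s and b=x
            and cl=0 and cm=1 and cr=0]])
        (auto simp: perI_indicator_def in_perI_def joint_cover_def)
  next
    case 3
    then show ?thesis
      using x s t st
      by (intro has_integral_eq_rhs[OF has_integral_unit_interval_piecewise_const[where a=t and b=x
            and cl=0 and cm=1 and cr=0]])
        (auto simp: perI_indicator_def in_perI_def joint_cover_def)
  qed
qed

lemma has_bochner_integral_perI_indicator_mult:
  assumes x: "x \<in> {0..1}" and s: "s \<in> {0..<1}" and t: "t \<in> {0..<1}"
  shows "has_bochner_integral unit_interval
           (\<lambda>y. perI_indicator x y s * perI_indicator x y t) (joint_cover s t x)"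
proof -
  have "((\<lambda>y. perI_indicator x y s * perI_indicator x y t) has_integral joint_cover s t x) {0..1}"
    using has_integral_perI_indicator_mult_ordered[OF x s t] has_integral_perI_indicator_mult_ordered[OF x t s]
    by (cases "s \<le> t") (auto simp: joint_cover_commute mult.commute)
  moreover have "\<bar>perI_indicator x y s * perI_indicator x y t\<bar> \<le> 1" for y
    by (simp add: perI_indicator_def)
  ultimately show ?thesis
    by (intro has_bochner_integral_unit_interval) auto
qed

lemma has_bochner_integral_len_cover:
  assumes s: "s \<in> {0..<1}"
  shows "has_bochner_integral unit_interval (len_cover s) (1/3)"
proof -
  have "(len_cover s has_integral (s/2 - s^3/6)) {0..s}"
    using s
    by (intro has_integral_interior_antiderivative[where F="\<lambda>x. x/2 + (s - x)^3/6"
          and f="\<lambda>x. (1 - (s - x)\<^sup>2)/2"])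
      (auto simp: len_cover_def intro!: derivative_eq_intros simp: power2_eq_square power3_eq_cube field_simps)
  moreover have "(len_cover s has_integral ((1 - s)\<^sup>2/2 - (1 - s)^3/6)) {s..1}"
    using s
    by (intro has_integral_interior_antiderivative[where F="\<lambda>x. (x - s)\<^sup>2/2 - (x - s)^3/6"
          and f="\<lambda>x. (x - s) - (x - s)\<^sup>2/2"])
      (auto simp: len_cover_def intro!: derivative_eq_intros simp: power2_eq_square power3_eq_cube field_simps)
  ultimately have "(len_cover s has_integral 1/3) {0..1}"
    by (rule has_integral_eq_rhs[OF has_integral_combine[rotated 2]])
      (use s in \<open>auto simp: power2_eq_square power3_eq_cube field_simps\<close>)
  moreover have "\<bar>len_cover s x\<bar> \<le> 1" if "x \<in> {0..1}" for x
  proof (cases "x \<le> s")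
    case True
    have "(s - x)\<^sup>2 \<le> 1" using s that by (auto simp: abs_square_le_1)
    then show ?thesis using True by (simp add: len_cover_def abs_le_iff field_simps)
  next
    case False
    have "(x - s)\<^sup>2 \<le> 1" "0 \<le> s" "x \<le> 1" using s that by (auto simp: abs_square_le_1)
    with zero_le_power2[of "x - s"] False show ?thesis
      unfolding len_cover_def if_not_P[OF False] abs_le_iff by (intro conjI) linarith+
  qed
  ultimately show ?thesis
    by (intro has_bochner_integral_unit_interval[where B=1]) auto
qed

lemma has_bochner_integral_joint_cover:
  assumes s: "s \<in> {0..<1}" and t: "t \<in> {0..<1}"
  shows "has_bochner_integral unit_interval (joint_cover s t) (kernel_per s t)"
proof -
  have ordered: "(joint_cover u v has_integral kernel_per u v) {0..1}"
    if u: "u \<in> {0..<1}" and v: "v \<in> {0..<1}" and uv: "u \<le> v" for u v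
    using u v uv
    by (intro has_integral_unit_interval_three_pieces[where a=u and b=v
          and Fl="\<lambda>x. x + x\<^sup>2/2 - v * x" and fl="\<lambda>x. 1 + x - v"
          and Fm="\<lambda>x. (x - u)\<^sup>2/2" and fm="\<lambda>x. x - u" and Fr="\<lambda>x. (x - v)\<^sup>2/2" and fr="\<lambda>x. x - v"])
      (auto simp: joint_cover_def kernel_per_def power2_eq_square field_simps intro!: derivative_eq_intros)
  have "(joint_cover s t has_integral kernel_per s t) {0..1}"
    using ordered[OF s t] ordered[OF t s]
    by (cases "s \<le> t") (auto simp: joint_cover_commute kernel_per_commute)
  then show ?thesis
    using s t by (intro has_bochner_integral_unit_interval[where B=2]) (auto simp: joint_cover_def)
qed

section \<open>The discrepancy as a quadratic form\<close>

definition quad_form :: "nat \<Rightarrow> (nat \<Rightarrow> nat \<Rightarrow> real) \<Rightarrow> (nat \<Rightarrow> real) \<Rightarrow> real" where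
  "quad_form n G x = (\<Sum>j<n. \<Sum>k<n. x j * x k * G j k)"

definition kernel_matrix :: "nat \<Rightarrow> (nat \<Rightarrow> nat \<Rightarrow> real) \<Rightarrow> nat \<Rightarrow> nat \<Rightarrow> real" where
  "kernel_matrix d P j k = (\<Prod>i<d. kernel_per (P j i) (P k i))"

lemma unit_cube_space_coord:
  assumes "x \<in> space (unit_cube d)" and "i < d"
  shows "x i \<in> {0..1}"
proof -
  have "x \<in> PiE {..<d} (\<lambda>_. space unit_interval)"
    using assms(1) unfolding unit_cube_def space_PiM .
  then show ?thesis
    using assms(2) PiE_mem[of x "{..<d}" "\<lambda>_. space unit_interval" i] by (simp add: space_restrict_space)
qed

lemma in_perB_indicator: "(if in_perB d x y p then c else 0) = c * (\<Prod>i<d. perI_indicator (x i) (y i) (p i))"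
proof -
  have "(\<Prod>i<d. perI_indicator (x i) (y i) (p i)) = (if in_perB d x y p then 1 else 0)"
    unfolding in_perB_def by (induction d) (auto simp: perI_indicator_def less_Suc_eq)
  then show ?thesis by simp
qed

lemma disc_perB_sq:
  "(disc_perB d N P w x y)\<^sup>2 =
     (\<Sum>j<N. \<Sum>k<N. w j * w k *
        (\<Prod>i<d. perI_indicator (x i) (y i) (P j i) * perI_indicator (x i) (y i) (P k i)))
     - 2 * (\<Sum>j<N. w j * (\<Prod>i<d. len_perI (x i) (y i) * perI_indicator (x i) (y i) (P j i)))
     + (\<Prod>i<d. (len_perI (x i) (y i))\<^sup>2)"
proof -
  define a where "a j = w j * (\<Prod>i<d. perI_indicator (x i) (y i) (P j i))" for j
  define A where "A = (\<Sum>j<N. a j)"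
  define V where "V = (\<Prod>i<d. len_perI (x i) (y i))"
  have "disc_perB d N P w x y = A - V"
    unfolding disc_perB_def A_def a_def V_def vol_perB_def by (simp add: in_perB_indicator)
  moreover have "A\<^sup>2 = (\<Sum>j<N. \<Sum>k<N. w j * w k *
        (\<Prod>i<d. perI_indicator (x i) (y i) (P j i) * perI_indicator (x i) (y i) (P k i)))"
    unfolding A_def power2_eq_square sum_product a_def prod.distrib
    by (intro sum.cong refl) (simp only: ac_simps)
  moreover have "A * V =
      (\<Sum>j<N. w j * (\<Prod>i<d. len_perI (x i) (y i) * perI_indicator (x i) (y i) (P j i)))"
    unfolding A_def sum_distrib_right a_def V_def prod.distrib
    by (intro sum.cong refl) (simp only: ac_simps)
  moreover have "V\<^sup>2 = (\<Prod>i<d. (len_perI (x i) (y i))\<^sup>2)"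
    unfolding V_def by (simp add: power2_eq_square prod.distrib)
  moreover have "(A - V)\<^sup>2 = A\<^sup>2 - 2 * (A * V) + V\<^sup>2"
    by (simp add: power2_diff)
  ultimately show ?thesis
    by (simp only:)
qed

lemma L2per_sq:
  assumes P: "point_set_in d N P"
  shows "(L2per d N P w)\<^sup>2 = quad_form N (kernel_matrix d P) w - 2 * sum w {..<N} / 3^d + 1 / 3^d"
proof -
  have P_coord: "0 \<le> P j i \<and> P j i < 1" if "j < N" "i < d" for j i
    using P that unfolding point_set_in_def by auto
  define inner where "inner x =
    (\<Sum>j<N. \<Sum>k<N. w j * w k * (\<Prod>i<d. joint_cover (P j i) (P k i) (x i)))
    - 2 * (\<Sum>j<N. w j * (\<Prod>i<d. len_cover (P j i) (x i))) + (\<Prod>i<d. 1/3)" for x :: "nat \<Rightarrow> real"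
  have inner_integral: "has_bochner_integral (unit_cube d) (\<lambda>y. (disc_perB d N P w x y)\<^sup>2) (inner x)"
    if x: "x \<in> space (unit_cube d)" for x
  proof -
    have x_coord: "0 \<le> x i \<and> x i \<le> 1" if "i < d" for i
      using unit_cube_space_coord[OF x that] by simp
    show ?thesis
      unfolding disc_perB_sq inner_def
      by (intro has_bochner_integral_add has_bochner_integral_diff has_bochner_integral_sum
          has_bochner_integral_mult_right has_bochner_integral_unit_cube_prod
          has_bochner_integral_perI_indicator_mult has_bochner_integral_len_perI_indicator
          has_bochner_integral_len_perI_sq)
        (simp_all add: P_coord x_coord)
  qed
  have outer_integral: "has_bochner_integral (unit_cube d) inner
      (quad_form N (kernel_matrix d P) w - 2 * (\<Sum>j<N. w j * (\<Prod>i<d. 1/3)) + (\<Prod>i<d. 1/3))"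
    unfolding inner_def quad_form_def kernel_matrix_def
    by (intro has_bochner_integral_add has_bochner_integral_diff has_bochner_integral_sum
        has_bochner_integral_mult_right has_bochner_integral_unit_cube_prod
        has_bochner_integral_joint_cover has_bochner_integral_len_cover has_bochner_integral_unit_interval_const)
      (simp_all add: P_coord)
  let ?I = "\<integral>x. (\<integral>y. (disc_perB d N P w x y)\<^sup>2 \<partial>unit_cube d) \<partial>unit_cube d"
  have "?I = (\<integral>x. inner x \<partial>unit_cube d)"
    using inner_integral by (intro Bochner_Integration.integral_cong refl has_bochner_integral_integral_eq)
  also have "\<dots> = quad_form N (kernel_matrix d P) w - 2 * sum w {..<N} / 3^d + 1 / 3^d"
    using has_bochner_integral_integral_eq[OF outer_integral]
    by (simp add: sum_divide_distrib[symmetric] power_one_over)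
  finally have "?I = quad_form N (kernel_matrix d P) w - 2 * sum w {..<N} / 3^d + 1 / 3^d" .
  moreover have "0 \<le> ?I"
    by (intro Bochner_Integration.integral_nonneg) auto
  ultimately show ?thesis
    unfolding L2per_def by simp
qed

section \<open>Positive semidefinite matrices\<close>

definition psd :: "nat \<Rightarrow> (nat \<Rightarrow> nat \<Rightarrow> real) \<Rightarrow> bool" where
  "psd n G \<longleftrightarrow> (\<forall>j<n. \<forall>k<n. G j k = G k j) \<and> (\<forall>x. 0 \<le> quad_form n G x)"

lemma psdI:
  "(\<And>j k. j < n \<Longrightarrow> k < n \<Longrightarrow> G j k = G k j) \<Longrightarrow> (\<And>x. 0 \<le> quad_form n G x) \<Longrightarrow> psd n G"
  unfolding psd_def by auto

lemma psd_commute: "psd n G \<Longrightarrow> j < n \<Longrightarrow> k < n \<Longrightarrow> G j k = G k j"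
  unfolding psd_def by auto

lemma psd_quad_form_nonneg: "psd n G \<Longrightarrow> 0 \<le> quad_form n G x"
  unfolding psd_def by auto

lemma quad_form_support:
  assumes "S \<subseteq> {..<n}" and "\<And>i. i \<notin> S \<Longrightarrow> x i = 0"
  shows "quad_form n G x = (\<Sum>j\<in>S. \<Sum>k\<in>S. x j * x k * G j k)"
proof -
  have "quad_form n G x = (\<Sum>j<n. \<Sum>k\<in>S. x j * x k * G j k)"
    unfolding quad_form_def using assms by (intro sum.cong refl sum.mono_neutral_right) auto
  also have "\<dots> = (\<Sum>j\<in>S. \<Sum>k\<in>S. x j * x k * G j k)"
    using assms by (intro sum.mono_neutral_right) auto
  finally show ?thesis .
qed

lemma quad_form_Suc:
  assumes "\<And>j. j < n \<Longrightarrow> G j n = G n j"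
  shows "quad_form (Suc n) G x =
    quad_form n G x + 2 * x n * (\<Sum>j<n. x j * G j n) + (x n)\<^sup>2 * G n n"
proof -
  have "(\<Sum>k<n. x n * x k * G n k) = (\<Sum>j<n. x j * x n * G j n)"
    using assms by (intro sum.cong refl) simp
  then show ?thesis
    unfolding quad_form_def
    by (simp add: sum.distrib power2_eq_square sum_distrib_left algebra_simps)
qed

lemma psd_diag_nonneg:
  assumes "psd n G" and "j < n"
  shows "0 \<le> G j j"
proof -
  have "0 \<le> quad_form n G (\<lambda>i. if i = j then 1 else 0)"
    by (rule psd_quad_form_nonneg[OF assms(1)])
  also have "\<dots> = G j j"
    using assms(2) by (subst quad_form_support[where S="{j}"]) auto
  finally show ?thesis .
qed

lemma psd_diag_zero_imp_zero:
  assumes G: "psd n G" and j: "j < n" and k: "k < n" and zero: "G k k = 0"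
  shows "G j k = 0"
proof (cases "j = k")
  case False
  have linear: "0 \<le> G j j + 2 * t * G j k" for t
  proof -
    have "0 \<le> quad_form n G (\<lambda>i. if i = j then 1 else if i = k then t else 0)"
      by (rule psd_quad_form_nonneg[OF G])
    also have "\<dots> = G j j + 2 * t * G j k"
      using j k False zero psd_commute[OF G k j]
      by (subst quad_form_support[where S="{j, k}"]) auto
    finally show ?thesis .
  qed
  show ?thesis
  proof (rule ccontr)
    assume "G j k \<noteq> 0"
    then have "G j j + 2 * (- (G j j + 1) / (2 * G j k)) * G j k = -1"
      by (simp add: field_simps)
    with linear[of "- (G j j + 1) / (2 * G j k)"] show False by linarith
  qed
qed (use zero in simp)

lemma psd_schur_complement:
  assumes G: "psd (Suc n) G"
  shows "psd n (\<lambda>j k. G j k - G j n * G k n / G n n)"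
proof (rule psdI)
  fix j k assume "j < n" "k < n"
  then show "G j k - G j n * G k n / G n n = G k j - G k n * G j n / G n n"
    using psd_commute[OF G, of j k] by simp
next
  fix x :: "nat \<Rightarrow> real"
  define g where "g = G n n"
  define T where "T = (\<Sum>j<n. x j * G j n)"
  define x' where "x' i = (if i < n then x i else - T / g)" for i
  have g: "0 \<le> g"
    unfolding g_def by (rule psd_diag_nonneg[OF G]) simp
  have T: "T = 0" if "g = 0"
    unfolding T_def using psd_diag_zero_imp_zero[OF G, of _ n] that by (simp add: g_def)
  have "0 \<le> quad_form (Suc n) G x'"
    by (rule psd_quad_form_nonneg[OF G])
  also have "\<dots> = quad_form n G x' + 2 * x' n * (\<Sum>j<n. x' j * G j n) + (x' n)\<^sup>2 * g"
    unfolding g_def by (rule quad_form_Suc) (use psd_commute[OF G] in simp)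
  also have "\<dots> = quad_form n G x - T\<^sup>2 / g"
    using g T by (cases "g = 0") (auto simp: x'_def T_def quad_form_def power2_eq_square field_simps)
  also have "T\<^sup>2 / g = (\<Sum>j<n. \<Sum>k<n. x j * x k * (G j n * G k n / g))"
    unfolding T_def power2_eq_square sum_product sum_divide_distrib
    by (intro sum.cong refl) (simp add: algebra_simps)
  finally show "0 \<le> quad_form n (\<lambda>j k. G j k - G j n * G k n / G n n) x"
    unfolding quad_form_def g_def by (simp add: right_diff_distrib sum_subtractf)
qed

lemma psd_gram_factorization:
  assumes "psd n G"
  shows "\<exists>c. \<forall>j<n. \<forall>k<n. G j k = (\<Sum>l<n. c j l * c k l)"
  using assms
proof (induction n arbitrary: G)
  case 0
  then show ?case by simp
next
  case (Suc n)
  note G = Suc.prems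
  define g where "g = G n n"
  have g: "0 \<le> g"
    unfolding g_def by (rule psd_diag_nonneg[OF G]) simp
  have zero: "G j n = 0" if "g = 0" "j < n" for j
    using psd_diag_zero_imp_zero[OF G, of j n] that by (simp add: g_def)
  obtain c' where c': "\<And>j k. j < n \<Longrightarrow> k < n \<Longrightarrow> G j k - G j n * G k n / g = (\<Sum>l<n. c' j l * c' k l)"
    using Suc.IH[OF psd_schur_complement[OF G]] unfolding g_def by blast
  \<comment> \<open>For \<open>g = 0\<close> the division by \<open>sqrt g\<close> yields 0, which is right since column \<open>n\<close>
    of \<open>G\<close> vanishes.\<close>
  define c where "c j l =
    (if l < n then (if j < n then c' j l else 0) else if j < n then G j n / sqrt g else sqrt g)" for j l
  have "G j k = (\<Sum>l<Suc n. c j l * c k l)" if j: "j < Suc n" and k: "k < Suc n" for j k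
  proof -
    consider "j < n" "k < n" | "j < n" "k = n" | "j = n" "k < n" | "j = n" "k = n"
      using j k by linarith
    then show ?thesis
    proof cases
      case 1
      then show ?thesis
        using c'[OF 1] g zero by (cases "g = 0") (auto simp: c_def real_sqrt_mult[symmetric])
    next
      case 2
      then show ?thesis
        using g zero by (cases "g = 0") (auto simp: c_def)
    next
      case 3
      then show ?thesis
        using g zero psd_commute[OF G, of n k] by (cases "g = 0") (auto simp: c_def)
    next
      case 4
      then show ?thesis
        using g by (simp add: c_def g_def)
    qed
  qed
  then show ?case by blast
qed

lemma psd_mult:
  assumes A: "psd n A" and B: "psd n B"
  shows "psd n (\<lambda>j k. A j k * B j k)"
proof (rule psdI)
  fix j k assume "j < n" "k < n"
  then show "A j k * B j k = A k j * B k j"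
    using psd_commute[OF A] psd_commute[OF B] by simp
next
  fix x :: "nat \<Rightarrow> real"
  obtain c where c: "\<And>j k. j < n \<Longrightarrow> k < n \<Longrightarrow> B j k = (\<Sum>l<n. c j l * c k l)"
    using psd_gram_factorization[OF B] by blast
  have "quad_form n (\<lambda>j k. A j k * B j k) x =
      (\<Sum>j<n. \<Sum>k<n. \<Sum>l<n. (x j * c j l) * (x k * c k l) * A j k)"
    unfolding quad_form_def
    by (intro sum.cong refl) (simp add: c sum_distrib_left mult_ac)
  also have "\<dots> = (\<Sum>l<n. quad_form n A (\<lambda>j. x j * c j l))"
    unfolding quad_form_def by (subst sum.swap, rule sum.cong[OF refl], rule sum.swap)
  also have "\<dots> \<ge> 0"
    by (intro sum_nonneg psd_quad_form_nonneg[OF A])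
  finally show "0 \<le> quad_form n (\<lambda>j k. A j k * B j k) x" .
qed

lemma psd_add: "psd n A \<Longrightarrow> psd n B \<Longrightarrow> psd n (\<lambda>j k. A j k + B j k)"
  unfolding psd_def quad_form_def by (auto simp: algebra_simps sum.distrib intro!: add_nonneg_nonneg)

lemma psd_scale: "psd n A \<Longrightarrow> 0 \<le> a \<Longrightarrow> psd n (\<lambda>j k. a * A j k)"
  unfolding psd_def quad_form_def
  by (auto simp: sum_distrib_left[symmetric] mult.left_commute[of _ a] intro!: mult_nonneg_nonneg)

lemma psd_const: "0 \<le> a \<Longrightarrow> psd n (\<lambda>j k. a)"
proof (rule psdI)
  fix x assume "0 \<le> a"
  moreover have "quad_form n (\<lambda>j k. a) x = a * (\<Sum>j<n. x j)\<^sup>2"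
    unfolding quad_form_def by (simp add: power2_eq_square sum_product sum_distrib_left algebra_simps)
  ultimately show "0 \<le> quad_form n (\<lambda>j k. a) x" by simp
qed simp

lemma psd_prod:
  fixes d :: nat
  assumes "\<And>i. i < d \<Longrightarrow> psd n (A i)"
  shows "psd n (\<lambda>j k. \<Prod>i<d. A i j k)"
  using assms
proof (induction d)
  case 0
  then show ?case using psd_const[of 1 n] by simp
next
  case (Suc d)
  then have "psd n (\<lambda>j k. (\<Prod>i<d. A i j k) * A d j k)"
    by (intro psd_mult) auto
  then show ?case by simp
qed

lemma psd_prod_diff:
  fixes d :: nat
  assumes B: "\<And>i. i < d \<Longrightarrow> psd n (B i)" and AB: "\<And>i. i < d \<Longrightarrow> psd n (\<lambda>j k. A i j k - B i j k)"
  shows "psd n (\<lambda>j k. (\<Prod>i<d. A i j k) - (\<Prod>i<d. B i j k))"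
  using B AB
proof (induction d)
  case 0
  then show ?case using psd_const[of 0 n] by simp
next
  case (Suc d)
  have "psd n (\<lambda>j k. (A d j k - B d j k) + B d j k)"
    using Suc.prems by (intro psd_add) auto
  then have A: "psd n (A d)" by simp
  have "psd n (\<lambda>j k. ((\<Prod>i<d. A i j k) - (\<Prod>i<d. B i j k)) * A d j k
      + (\<Prod>i<d. B i j k) * (A d j k - B d j k))"
    using Suc by (intro psd_add psd_mult A psd_prod) auto
  then show ?case by (simp add: algebra_simps)
qed

lemma psd_diag_sum_sq_le:
  assumes M: "psd n M"
  shows "(\<Sum>j<n. x j * M j j)\<^sup>2 \<le> real n * quad_form n (\<lambda>j k. (M j k)\<^sup>2) x"
proof -
  obtain c where c: "\<And>j k. j < n \<Longrightarrow> k < n \<Longrightarrow> M j k = (\<Sum>l<n. c j l * c k l)"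
    using psd_gram_factorization[OF M] by blast
  define F where "F l l' = (\<Sum>j<n. x j * c j l * c j l')" for l l'
  have "quad_form n (\<lambda>j k. (M j k)\<^sup>2) x =
      (\<Sum>j<n. \<Sum>k<n. \<Sum>l<n. \<Sum>l'<n. (x j * c j l * c j l') * (x k * c k l * c k l'))"
    unfolding quad_form_def
    by (intro sum.cong refl) (simp add: c power2_eq_square sum_product sum_distrib_left mult_ac)
  also have "\<dots> = (\<Sum>j<n. \<Sum>l<n. \<Sum>l'<n. \<Sum>k<n. (x j * c j l * c j l') * (x k * c k l * c k l'))"
    by (rule sum.cong[OF refl], subst sum.swap, rule sum.cong[OF refl], rule sum.swap)
  also have "\<dots> = (\<Sum>l<n. \<Sum>l'<n. \<Sum>j<n. \<Sum>k<n. (x j * c j l * c j l') * (x k * c k l * c k l'))"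
    by (subst sum.swap, rule sum.cong[OF refl], rule sum.swap)
  also have "\<dots> = (\<Sum>l<n. \<Sum>l'<n. (F l l')\<^sup>2)"
    unfolding F_def power2_eq_square sum_product ..
  finally have form: "quad_form n (\<lambda>j k. (M j k)\<^sup>2) x = (\<Sum>l<n. \<Sum>l'<n. (F l l')\<^sup>2)" .
  have "(\<Sum>j<n. x j * M j j) = (\<Sum>l<n. F l l)"
    unfolding F_def by (subst sum.swap) (simp add: c sum_distrib_left mult_ac)
  then have "(\<Sum>j<n. x j * M j j)\<^sup>2 \<le> real n * (\<Sum>l<n. (F l l)\<^sup>2)"
    using sum_squared_le_sum_of_squares[of "\<lambda>l. F l l" "{..<n}"] by (simp add: mult.commute)
  also have "\<dots> \<le> real n * quad_form n (\<lambda>j k. (M j k)\<^sup>2) x"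
    unfolding form by (intro mult_left_mono sum_mono member_le_sum) auto
  finally show ?thesis .
qed

section \<open>Positive semidefinite kernels on the torus\<close>

lemma nonneg_quadratic_imp_discriminant_le:
  fixes a b c :: real
  assumes nonneg: "\<And>l. 0 \<le> a * l\<^sup>2 - 2 * b * l + c" and c: "0 < c"
  shows "b\<^sup>2 \<le> a * c"
proof (cases "b = 0")
  case True
  show ?thesis
  proof (rule ccontr)
    assume "\<not> ?thesis"
    then have a: "a < 0" using True c by (simp add: not_le mult_less_0_iff)
    have "(sqrt (- 2 * c / a))\<^sup>2 = - 2 * c / a"
      using a c by (simp add: divide_pos_neg less_imp_le)
    then have "a * (sqrt (- 2 * c / a))\<^sup>2 - 2 * b * sqrt (- 2 * c / a) + c = - c"
      using a True by simp
    with nonneg[of "sqrt (- 2 * c / a)"] c show False by linarith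
  qed
next
  case False
  have "0 \<le> a * (c / b)\<^sup>2 - 2 * b * (c / b) + c" by (rule nonneg)
  also have "\<dots> = c * (a * c - b\<^sup>2) / b\<^sup>2"
    using False by (simp add: power2_eq_square field_simps)
  finally show ?thesis
    using c False by (simp add: zero_le_divide_iff zero_le_mult_iff)
qed

text \<open>In dimension one the discrepancy formula reads 0 <= 3 Q l^2 - 2 S l + 1 for the weights
  l * x, and the discriminant condition is S^2 <= 3 Q.\<close>

lemma psd_kernel_per_minus_third:
  assumes s: "\<And>j. j < n \<Longrightarrow> s j \<in> {0..<1}"
  shows "psd n (\<lambda>j k. kernel_per (s j) (s k) - 1/3)"
proof (rule psdI)
  fix j k show "kernel_per (s j) (s k) - 1/3 = kernel_per (s k) (s j) - 1/3"
    by (simp add: kernel_per_commute)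
next
  fix x :: "nat \<Rightarrow> real"
  define P where "P j i = s j" for j i :: nat
  define Q where "Q = quad_form n (\<lambda>j k. kernel_per (s j) (s k)) x"
  define S where "S = (\<Sum>j<n. x j)"
  have P: "point_set_in 1 n P"
    unfolding point_set_in_def P_def using s by auto
  have "0 \<le> (3 * Q) * l\<^sup>2 - 2 * S * l + 1" for l
  proof -
    have "quad_form n (kernel_matrix 1 P) (\<lambda>j. l * x j) = l\<^sup>2 * Q"
      unfolding quad_form_def kernel_matrix_def Q_def P_def
      by (simp add: sum_distrib_left power2_eq_square mult_ac)
    moreover have "sum (\<lambda>j. l * x j) {..<n} = l * S"
      unfolding S_def by (simp add: sum_distrib_left)
    ultimately have "(L2per 1 n P (\<lambda>j. l * x j))\<^sup>2 = ((3 * Q) * l\<^sup>2 - 2 * S * l + 1) / 3"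
      using L2per_sq[OF P, of "\<lambda>j. l * x j"] by (simp add: field_simps)
    then show ?thesis
      by (metis zero_le_power2 zero_le_divide_iff zero_less_numeral not_less)
  qed
  then have "S\<^sup>2 \<le> 3 * Q * 1"
    by (intro nonneg_quadratic_imp_discriminant_le) auto
  moreover have "quad_form n (\<lambda>j k. kernel_per (s j) (s k) - 1/3) x = Q - S\<^sup>2 / 3"
    unfolding quad_form_def Q_def S_def
    by (simp add: right_diff_distrib sum_subtractf power2_eq_square sum_product sum_divide_distrib)
  ultimately show "0 \<le> quad_form n (\<lambda>j k. kernel_per (s j) (s k) - 1/3) x"
    by simp
qed

definition bernoulli2 :: "real \<Rightarrow> real" where
  "bernoulli2 u = u\<^sup>2 - u + 1/6"

definition periodic_bernoulli2 :: "real \<Rightarrow> real \<Rightarrow> real" where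
  "periodic_bernoulli2 s x = bernoulli2 (if s < x then x - s else x - s + 1)"

definition bernoulli4_kernel :: "real \<Rightarrow> real \<Rightarrow> real" where
  "bernoulli4_kernel s t = 1/180 + (kernel_per s t - 1/3) / 3 - (kernel_per s t - 1/3)\<^sup>2"

lemma bernoulli4_kernel_commute: "bernoulli4_kernel s t = bernoulli4_kernel t s"
  unfolding bernoulli4_kernel_def by (simp add: kernel_per_commute)

lemma periodic_bernoulli2_measurable [measurable]: "periodic_bernoulli2 s \<in> borel_measurable borel"
  unfolding periodic_bernoulli2_def bernoulli2_def by measurable

lemma periodic_bernoulli2_bound:
  assumes "s \<in> {0..<1}" and "x \<in> {0..1}"
  shows "\<bar>periodic_bernoulli2 s x\<bar> \<le> 1"
proof -
  define u where "u = (if s < x then x - s else x - s + 1)"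
  have "0 \<le> u" "u \<le> 1"
    using assms by (auto simp: u_def)
  then have "u\<^sup>2 \<le> u" "0 \<le> u\<^sup>2"
    by (simp_all add: power2_eq_square mult_left_le_one_le)
  with \<open>u \<le> 1\<close> have "\<bar>u\<^sup>2 - u + 1/6\<bar> \<le> 1"
    unfolding abs_le_iff by (intro conjI) linarith+
  then show ?thesis
    by (simp add: periodic_bernoulli2_def bernoulli2_def u_def)
qed

text \<open>The antiderivative comes from integrating by parts twice with the Bernoulli polynomials
  \<open>B\<^sub>3, B\<^sub>4, B\<^sub>5\<close>.\<close>

lemma has_integral_periodic_bernoulli2_mult:
  assumes s: "s \<in> {0..<1}" and t: "t \<in> {0..<1}"
  shows "((\<lambda>x. periodic_bernoulli2 s x * periodic_bernoulli2 t x) has_integral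
           bernoulli4_kernel s t / 6) {0..1}"
proof -
  define F where "F a b x =
      ((x - a)^3 - 3/2 * (x - a)\<^sup>2 + (x - a)/2) * bernoulli2 (x - b) / 3
      - ((x - a)^4 - 2 * (x - a)^3 + (x - a)\<^sup>2 - 1/30) * (x - b - 1/2) / 6
      + ((x - a)^5 - 5/2 * (x - a)^4 + 5/3 * (x - a)^3 - (x - a)/6) / 30" for a b x :: real
  have F: "(F a b has_real_derivative bernoulli2 (x - a) * bernoulli2 (x - b)) (at x)" for a b x
    unfolding F_def[abs_def] bernoulli2_def
    by (auto intro!: derivative_eq_intros) (simp add: field_simps; algebra)
  have ordered: "((\<lambda>x. periodic_bernoulli2 u x * periodic_bernoulli2 v x) has_integral
           bernoulli4_kernel u v / 6) {0..1}"
    if u: "u \<in> {0..<1}" and v: "v \<in> {0..<1}" and uv: "u \<le> v" for u v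
  proof -
    have abs_uv: "\<bar>u - v\<bar> = v - u"
      using uv by simp
    have "F (u - 1) (v - 1) u - F (u - 1) (v - 1) 0 + (F u (v - 1) v - F u (v - 1) u)
        + (F u v 1 - F u v v) = bernoulli4_kernel u v / 6"
      unfolding F_def bernoulli2_def bernoulli4_kernel_def kernel_per_def abs_uv
      by (simp add: field_simps) algebra
    from has_integral_unit_interval_three_pieces[OF _ _ _ F[of "u - 1" "v - 1"] _ F[of u "v - 1"] _
        F[of u v] _ this]
    show ?thesis
      using u v uv by (auto simp: periodic_bernoulli2_def algebra_simps)
  qed
  show ?thesis
    using ordered[OF s t] ordered[OF t s]
    by (cases "s \<le> t") (auto simp: bernoulli4_kernel_commute mult.commute)
qed

lemma psd_gram:
  fixes f :: "nat \<Rightarrow> 'a \<Rightarrow> real"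
  assumes "\<And>j k. j < n \<Longrightarrow> k < n \<Longrightarrow> has_bochner_integral M (\<lambda>y. f j y * f k y) (G j k)"
  shows "psd n G"
proof (rule psdI)
  fix j k assume "j < n" "k < n"
  then show "G j k = G k j"
    using assms[of j k] assms[of k j] by (simp add: mult.commute has_bochner_integral_eq)
next
  fix x :: "nat \<Rightarrow> real"
  have "has_bochner_integral M (\<lambda>y. \<Sum>j<n. \<Sum>k<n. x j * x k * (f j y * f k y)) (quad_form n G x)"
    unfolding quad_form_def by (intro has_bochner_integral_sum has_bochner_integral_mult_right assms) auto
  moreover have "(\<Sum>j<n. \<Sum>k<n. x j * x k * (f j y * f k y)) = (\<Sum>j<n. x j * f j y)\<^sup>2" for y
    by (simp add: power2_eq_square sum_product mult_ac)
  ultimately show "0 \<le> quad_form n G x"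
    by (metis (no_types, lifting) Bochner_Integration.integral_nonneg has_bochner_integral_integral_eq
        zero_le_power2)
qed

lemma psd_bernoulli4_kernel:
  assumes s: "\<And>j. j < n \<Longrightarrow> s j \<in> {0..<1}"
  shows "psd n (\<lambda>j k. bernoulli4_kernel (s j) (s k))"
proof -
  have "psd n (\<lambda>j k. bernoulli4_kernel (s j) (s k) / 6)"
  proof (rule psd_gram[where f="\<lambda>j. periodic_bernoulli2 (s j)"])
    fix j k assume "j < n" "k < n"
    then have "\<bar>periodic_bernoulli2 (s j) y * periodic_bernoulli2 (s k) y\<bar> \<le> 1" if "y \<in> {0..1}" for y
      using periodic_bernoulli2_bound[OF s that] periodic_bernoulli2_bound[OF s that]
      by (simp add: abs_mult mult_le_one)
    with \<open>j < n\<close> \<open>k < n\<close> show "has_bochner_integral unit_interval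
        (\<lambda>y. periodic_bernoulli2 (s j) y * periodic_bernoulli2 (s k) y) (bernoulli4_kernel (s j) (s k) / 6)"
      by (intro has_bochner_integral_unit_interval has_integral_periodic_bernoulli2_mult s) auto
  qed
  from psd_scale[OF this, of 6] show ?thesis by simp
qed

definition minorant_kernel :: "real \<Rightarrow> real \<Rightarrow> real" where
  "minorant_kernel s t = 57/100 + 3/10 * (kernel_per s t - 1/3)"

lemma psd_minorant_kernel:
  assumes "\<And>j. j < n \<Longrightarrow> s j \<in> {0..<1}"
  shows "psd n (\<lambda>j k. minorant_kernel (s j) (s k))"
  unfolding minorant_kernel_def
  by (intro psd_add psd_const psd_scale psd_kernel_per_minus_third assms) auto

lemma psd_kernel_per_minus_minorant_sq:
  assumes s: "\<And>j. j < n \<Longrightarrow> s j \<in> {0..<1}"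
  shows "psd n (\<lambda>j k. kernel_per (s j) (s k) - (minorant_kernel (s j) (s k))\<^sup>2)"
proof -
  have "kernel_per u v - (minorant_kernel u v)\<^sup>2 =
      (1/3 - (57/100)\<^sup>2 - (3/10)\<^sup>2/180) + (1 - 2 * (57/100) * (3/10) - (3/10)\<^sup>2/3) * (kernel_per u v - 1/3)
      + (3/10)\<^sup>2 * bernoulli4_kernel u v" for u v
    unfolding minorant_kernel_def bernoulli4_kernel_def
    by (simp add: power2_eq_square algebra_simps field_simps)
  moreover have "psd n (\<lambda>j k. (1/3 - (57/100)\<^sup>2 - (3/10)\<^sup>2/180)
      + (1 - 2 * (57/100) * (3/10) - (3/10)\<^sup>2/3) * (kernel_per (s j) (s k) - 1/3)
      + (3/10)\<^sup>2 * bernoulli4_kernel (s j) (s k))"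
    by (intro psd_add psd_const psd_scale psd_kernel_per_minus_third psd_bernoulli4_kernel s)
      (auto simp: power2_eq_square)
  ultimately show ?thesis by simp
qed

lemma quad_form_kernel_matrix_ge_sum_sq:
  assumes P: "point_set_in d N P" and N: "0 < N"
  shows "(961/2500)^d / real N * (sum w {..<N})\<^sup>2 \<le> quad_form N (kernel_matrix d P) w"
proof -
  have P_coord: "\<And>j. j < N \<Longrightarrow> P j i \<in> {0..<1}" if "i < d" for i
    using P that unfolding point_set_in_def by auto
  define M where "M j k = (\<Prod>i<d. minorant_kernel (P j i) (P k i))" for j k
  have "M j j = (31/50)^d" for j
    by (simp add: M_def minorant_kernel_def kernel_per_diag)
  moreover have "(961/2500::real)^d = (31/50)^d * (31/50)^d"
    by (simp add: power_mult_distrib[symmetric])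
  ultimately have "(961/2500)^d * (sum w {..<N})\<^sup>2 = (\<Sum>j<N. w j * M j j)\<^sup>2"
    by (simp add: sum_distrib_right[symmetric] power_mult_distrib power2_eq_square)
  also have "\<dots> \<le> real N * quad_form N (\<lambda>j k. (M j k)\<^sup>2) w"
    unfolding M_def by (intro psd_diag_sum_sq_le psd_prod psd_minorant_kernel P_coord)
  also have "\<dots> \<le> real N * quad_form N (kernel_matrix d P) w"
  proof (rule mult_left_mono)
    have "psd N (\<lambda>j k. (\<Prod>i<d. kernel_per (P j i) (P k i)) - (\<Prod>i<d. (minorant_kernel (P j i) (P k i))\<^sup>2))"
    proof (rule psd_prod_diff)
      fix i assume "i < d"
      have "psd N (\<lambda>j k. minorant_kernel (P j i) (P k i))"
        using P_coord[OF \<open>i < d\<close>] by (rule psd_minorant_kernel)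
      from psd_mult[OF this this] show "psd N (\<lambda>j k. (minorant_kernel (P j i) (P k i))\<^sup>2)"
        by (simp add: power2_eq_square)
      show "psd N (\<lambda>j k. kernel_per (P j i) (P k i) - (minorant_kernel (P j i) (P k i))\<^sup>2)"
        using \<open>i < d\<close> by (intro psd_kernel_per_minus_minorant_sq P_coord)
    qed
    from psd_quad_form_nonneg[OF this, of w]
    show "quad_form N (\<lambda>j k. (M j k)\<^sup>2) w \<le> quad_form N (kernel_matrix d P) w"
      unfolding quad_form_def M_def kernel_matrix_def
      by (simp add: right_diff_distrib sum_subtractf prod_power_distrib)
  qed simp
  finally show ?thesis
    using N by (simp add: field_simps)
qed

lemma quad_form_kernel_matrix_ge_sum_sq_nonneg:
  assumes w: "\<And>j. j < N \<Longrightarrow> 0 \<le> w j"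
  shows "(\<Sum>j<N. (w j)\<^sup>2) / 2^d \<le> quad_form N (kernel_matrix d P) w"
proof -
  have "(\<Sum>j<N. (w j)\<^sup>2) / 2^d = (\<Sum>j<N. w j * w j * kernel_matrix d P j j)"
    by (simp add: kernel_matrix_def kernel_per_diag sum_divide_distrib power2_eq_square power_one_over)
  also have "\<dots> \<le> quad_form N (kernel_matrix d P) w"
    unfolding quad_form_def
    by (intro sum_mono member_le_sum[where f="\<lambda>k. w _ * w k * kernel_matrix d P _ k"])
      (auto simp: w kernel_matrix_def intro!: mult_nonneg_nonneg prod_nonneg kernel_per_nonneg)
  finally show ?thesis .
qed

section \<open>Lower bounds on the number of points\<close>

lemma L2per_le_iff:
  assumes "0 \<le> e"
  shows "L2per d N P w \<le> e * 3 powr (- real d / 2) \<longleftrightarrow> (L2per d N P w)\<^sup>2 \<le> e\<^sup>2 / 3^d"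
proof -
  have "(3 powr (- real d / 2))\<^sup>2 = 3 powr (- real d)"
    by (simp add: powr_powr[symmetric] power2_eq_square powr_add[symmetric])
  also have "\<dots> = 1 / 3^d"
    by (simp add: powr_minus powr_realpow divide_inverse)
  finally have "(e * 3 powr (- real d / 2))\<^sup>2 = e\<^sup>2 / 3^d"
    by (simp add: power_mult_distrib)
  moreover have "0 \<le> L2per d N P w"
    unfolding L2per_def by simp
  moreover have "0 \<le> e * 3 powr (- real d / 2)"
    using assms by simp
  ultimately show ?thesis
    using abs_le_square_iff[of "L2per d N P w" "e * 3 powr (- real d / 2)"] by simp
qed

lemma card_ge_of_quad_form_ge:
  assumes P: "point_set_in d N P" and N: "0 < N" and B: "0 < B" and e: "0 \<le> e"
    and Q: "(sum w {..<N})\<^sup>2 / (real N * B) \<le> quad_form N (kernel_matrix d P) w"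
    and L: "L2per d N P w \<le> e * 3 powr (- real d / 2)"
  shows "(1 - e\<^sup>2) * 3^d \<le> real N * B"
proof -
  define A :: real where "A = 3^d"
  define K where "K = real N * B"
  define S where "S = sum w {..<N}"
  have A: "0 < A" unfolding A_def by simp
  have K: "0 < K" unfolding K_def using N B by simp
  have "S\<^sup>2 / K + K / A\<^sup>2 - 2 * S / A = (S * A - K)\<^sup>2 / (K * A\<^sup>2)"
    using A K by (simp add: field_simps power2_eq_square; algebra)
  also have "\<dots> \<ge> 0"
    using A K by (intro divide_nonneg_pos) auto
  finally have am_gm: "2 * S / A \<le> S\<^sup>2 / K + K / A\<^sup>2"
    by simp
  have "quad_form N (kernel_matrix d P) w - 2 * S / A + 1 / A \<le> e\<^sup>2 / A"
    using L2per_sq[OF P, of w] L[unfolded L2per_le_iff[OF e]] by (simp add: A_def S_def)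
  with Q am_gm have "1 / A - K / A\<^sup>2 \<le> e\<^sup>2 / A"
    unfolding S_def K_def by linarith
  then have "A * A \<le> A * (K + e\<^sup>2 * A)"
    using A by (simp add: field_simps power2_eq_square)
  then have "A - K \<le> e\<^sup>2 * A"
    using A by (simp add: mult_le_cancel_left_pos)
  then show ?thesis
    unfolding A_def K_def by (simp add: algebra_simps)
qed

lemma card_ge_equal_weights:
  assumes P: "point_set_in d N P" and N: "0 < N" and e: "0 \<le> e"
    and L: "L2per d N P (\<lambda>_. 1 / real N) \<le> e * 3 powr (- real d / 2)"
  shows "1 / (1 + e\<^sup>2) * (3/2)^d \<le> real N"
proof -
  have "(\<Sum>j<N. (1 / real N)\<^sup>2) / 2^d \<le> quad_form N (kernel_matrix d P) (\<lambda>_. 1 / real N)"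
    by (rule quad_form_kernel_matrix_ge_sum_sq_nonneg) simp
  moreover have "(\<Sum>j<N. (1 / real N)\<^sup>2) / 2^d = 1 / (real N * 2^d)"
    using N by (simp add: power2_eq_square)
  moreover have "quad_form N (kernel_matrix d P) (\<lambda>_. 1 / real N) - 1 / 3^d \<le> e\<^sup>2 / 3^d"
    using L2per_sq[OF P, of "\<lambda>_. 1 / real N"] L[unfolded L2per_le_iff[OF e]] N by simp
  ultimately have "1 / (real N * 2^d) \<le> (1 + e\<^sup>2) / 3^d"
    by (simp add: add_divide_distrib)
  then have "3^d \<le> real N * (2^d * (1 + e\<^sup>2))"
    using N by (simp add: field_simps)
  then show ?thesis
    by (simp add: power_divide field_simps add_pos_nonneg)
qed

lemma card_ge_positive_weights:
  assumes P: "point_set_in d N P" and N: "0 < N" and e: "0 \<le> e" and w: "\<And>j. j < N \<Longrightarrow> 0 < w j"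
    and L: "L2per d N P w \<le> e * 3 powr (- real d / 2)"
  shows "(1 - e\<^sup>2) * (3/2)^d \<le> real N"
proof -
  have "(sum w {..<N})\<^sup>2 \<le> (\<Sum>j<N. (w j)\<^sup>2) * real N"
    using sum_squared_le_sum_of_squares[of w "{..<N}"] by simp
  then have "(sum w {..<N})\<^sup>2 / (real N * 2^d) \<le> (\<Sum>j<N. (w j)\<^sup>2) / 2^d"
    using N by (simp add: field_simps)
  also have "\<dots> \<le> quad_form N (kernel_matrix d P) w"
    using w by (intro quad_form_kernel_matrix_ge_sum_sq_nonneg less_imp_le)
  finally have "(1 - e\<^sup>2) * 3^d \<le> real N * 2^d"
    by (intro card_ge_of_quad_form_ge[OF P N _ e _ L]) auto
  then show ?thesis
    by (simp add: power_divide field_simps)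
qed

lemma card_ge_real_weights:
  assumes P: "point_set_in d N P" and N: "0 < N" and e: "0 \<le> e"
    and L: "L2per d N P w \<le> e * 3 powr (- real d / 2)"
  shows "(1 - e\<^sup>2) * (2883/2500)^d \<le> real N"
proof -
  have "(sum w {..<N})\<^sup>2 / (real N * (2500/961)^d) \<le> quad_form N (kernel_matrix d P) w"
    using quad_form_kernel_matrix_ge_sum_sq[OF P N, of w] by (simp add: power_divide field_simps)
  then have "(1 - e\<^sup>2) * 3^d \<le> real N * (2500/961)^d"
    by (intro card_ge_of_quad_form_ge[OF P N _ e _ L]) auto
  then have "(1 - e\<^sup>2) * (3^d / (2500/961)^d) \<le> real N"
    by (simp add: field_simps)
  moreover have "(3::real)^d / (2500/961)^d = (2883/2500)^d"
    by (simp add: power_divide[symmetric])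
  ultimately show ?thesis by simp
qed

section \<open>Grids\<close>

lemma sum_lessThan_mult:
  fixes f :: "nat \<Rightarrow> 'a::comm_monoid_add"
  shows "(\<Sum>j<n * k. f j) = (\<Sum>q<n. \<Sum>r<k. f (q * k + r))"
proof -
  have "(\<Sum>j<n * k. f j) = (\<Sum>q<n. \<Sum>j\<in>{q * k..<q * k + k}. f j)"
    by (rule sum.nat_group[symmetric])
  also have "\<dots> = (\<Sum>q<n. \<Sum>r<k. f (q * k + r))"
  proof (rule sum.cong[OF refl])
    fix q
    show "(\<Sum>j\<in>{q * k..<q * k + k}. f j) = (\<Sum>r<k. f (q * k + r))"
      using sum.atLeastLessThan_shift_0[of f "q * k" "q * k + k"] by (simp add: atLeast0LessThan)
  qed
  finally show ?thesis .
qed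

lemma digit_mult_power_add_low:
  fixes m q r :: nat
  assumes "0 < m" and "i < d"
  shows "(q * m^d + r) div m^i mod m = r div m^i mod m"
proof -
  define K where "K = m^(d - Suc i) * q"
  have "q * m^d + r = r + m^i * (m * K)"
    using assms(2) by (simp add: K_def mult_ac flip: power_add power_Suc)
  then have "(q * m^d + r) div m^i = m * K + r div m^i"
    using assms(1) by (simp add: div_mult_self2)
  then show ?thesis by simp
qed

lemma digit_mult_power_add_top:
  fixes m q r :: nat
  assumes "r < m^d" and "q < m"
  shows "(q * m^d + r) div m^d mod m = q"
  using assms by simp

lemma sum_digits_prod:
  fixes g :: "nat \<Rightarrow> nat \<Rightarrow> real" and m :: nat
  assumes m: "0 < m"
  shows "(\<Sum>j<m^d. \<Sum>k<m^d. \<Prod>i<d. g (j div m^i mod m) (k div m^i mod m)) = (\<Sum>a<m. \<Sum>b<m. g a b)^d"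
proof (induction d)
  case 0
  then show ?case by simp
next
  case (Suc d)
  define D where "D j k = (\<Prod>i<Suc d. g (j div m^i mod m) (k div m^i mod m))" for j k
  define E where "E j k = (\<Prod>i<d. g (j div m^i mod m) (k div m^i mod m))" for j k
  have digits: "D (q * m^d + r) (q' * m^d + r') = E r r' * g q q'"
    if "r < m^d" "r' < m^d" "q < m" "q' < m" for r r' q q'
  proof -
    have "(\<Prod>i<d. g ((q * m^d + r) div m^i mod m) ((q' * m^d + r') div m^i mod m)) = E r r'"
      unfolding E_def using m by (intro prod.cong refl) (simp add: digit_mult_power_add_low)
    then show ?thesis
      unfolding D_def using that by (simp add: digit_mult_power_add_top)
  qed
  have "(\<Sum>j<m^Suc d. \<Sum>k<m^Suc d. D j k) = (\<Sum>q<m. \<Sum>r<m^d. \<Sum>q'<m. \<Sum>r'<m^d. D (q * m^d + r) (q' * m^d + r'))"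
    by (simp only: power_Suc sum_lessThan_mult)
  also have "\<dots> = (\<Sum>q<m. \<Sum>r<m^d. \<Sum>q'<m. \<Sum>r'<m^d. E r r' * g q q')"
    by (intro sum.cong refl) (simp add: digits)
  also have "\<dots> = (\<Sum>q<m. \<Sum>q'<m. \<Sum>r<m^d. \<Sum>r'<m^d. E r r' * g q q')"
    by (rule sum.cong[OF refl], rule sum.swap)
  also have "\<dots> = (\<Sum>r<m^d. \<Sum>r'<m^d. E r r') * (\<Sum>q<m. \<Sum>q'<m. g q q')"
    by (simp only: sum_distrib_left[symmetric] sum_distrib_right[symmetric])
  finally show ?case
    using Suc by (simp add: D_def E_def)
qed

lemma sum_lessThan_of_nat: "(\<Sum>a<m. real a) = real m * (real m - 1) / 2"
  by (induction m) (auto simp: field_simps)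

lemma sum_lessThan_of_nat_sq: "(\<Sum>a<m. (real a)\<^sup>2) = real m * (real m - 1) * (2 * real m - 1) / 6"
  by (induction m) (auto simp: field_simps power2_eq_square)

lemma sum_abs_diff_lessThan: "(\<Sum>a<m. \<Sum>b<m. \<bar>real a - real b\<bar>) = ((real m)^3 - real m) / 3"
proof (induction m)
  case 0
  then show ?case by simp
next
  case (Suc m)
  have row: "(\<Sum>b<m. \<bar>real m - real b\<bar>) = real m * real m - real m * (real m - 1) / 2"
  proof -
    have "(\<Sum>b<m. \<bar>real m - real b\<bar>) = (\<Sum>b<m. real m - real b)"
      by (intro sum.cong refl) auto
    then show ?thesis
      by (simp add: sum_subtractf sum_lessThan_of_nat)
  qed
  have "(\<Sum>a<Suc m. \<Sum>b<Suc m. \<bar>real a - real b\<bar>) =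
      (\<Sum>a<m. \<Sum>b<m. \<bar>real a - real b\<bar>) + (\<Sum>a<m. \<bar>real a - real m\<bar>) + (\<Sum>b<m. \<bar>real m - real b\<bar>)"
    by (simp add: sum.distrib)
  also have "\<dots> = ((real m)^3 - real m) / 3 + 2 * (real m * real m - real m * (real m - 1) / 2)"
    using row by (simp add: Suc abs_minus_commute)
  also have "\<dots> = ((real (Suc m))^3 - real (Suc m)) / 3"
    by (simp add: field_simps power3_eq_cube)
  finally show ?case .
qed

lemma sum_sq_diff_lessThan: "(\<Sum>a<m. \<Sum>b<m. (real a - real b)\<^sup>2) = (real m)\<^sup>2 * ((real m)\<^sup>2 - 1) / 6"
proof -
  have "(\<Sum>a<m. \<Sum>b<m. (real a - real b)\<^sup>2) =
      (\<Sum>a<m. \<Sum>b<m. (real a)\<^sup>2 + (real b)\<^sup>2 - 2 * real a * real b)"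
    by (intro sum.cong refl) (simp add: power2_eq_square algebra_simps)
  also have "\<dots> = 2 * real m * (\<Sum>a<m. (real a)\<^sup>2) - 2 * (\<Sum>a<m. real a)\<^sup>2"
    by (simp add: sum.distrib sum_subtractf sum_distrib_left sum_distrib_right[symmetric]
        power2_eq_square mult_ac)
  also have "\<dots> = (real m)\<^sup>2 * ((real m)\<^sup>2 - 1) / 6"
    unfolding sum_lessThan_of_nat sum_lessThan_of_nat_sq by (simp add: field_simps power2_eq_square)
  finally show ?thesis .
qed

lemma sum_kernel_per_grid:
  assumes m: "0 < m"
  shows "(\<Sum>a<m. \<Sum>b<m. kernel_per (real a / real m) (real b / real m)) = (real m)\<^sup>2 / 3 + 1/6"
proof -
  have "kernel_per (real a / real m) (real b / real m) =
      1/2 - \<bar>real a - real b\<bar> / real m + (real a - real b)\<^sup>2 / (real m)\<^sup>2" for a b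
    unfolding kernel_per_def using m by (simp add: diff_divide_distrib[symmetric] power_divide)
  then have "(\<Sum>a<m. \<Sum>b<m. kernel_per (real a / real m) (real b / real m)) =
      (real m)\<^sup>2 / 2 - (\<Sum>a<m. \<Sum>b<m. \<bar>real a - real b\<bar>) / real m
      + (\<Sum>a<m. \<Sum>b<m. (real a - real b)\<^sup>2) / (real m)\<^sup>2"
    by (simp add: sum.distrib sum_subtractf sum_divide_distrib power2_eq_square)
  also have "\<dots> = (real m)\<^sup>2 / 3 + 1/6"
    unfolding sum_abs_diff_lessThan sum_sq_diff_lessThan
    using m by (simp add: field_simps power2_eq_square power3_eq_cube)
  finally show ?thesis .
qed

definition grid_point_set :: "nat \<Rightarrow> nat \<Rightarrow> nat \<Rightarrow> real" where
  "grid_point_set m j i = real (j div m^i mod m) / real m"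

lemma point_set_in_grid: "0 < m \<Longrightarrow> point_set_in d N (grid_point_set m)"
  unfolding point_set_in_def grid_point_set_def by auto

lemma quad_form_grid:
  assumes m: "0 < m"
  shows "quad_form (m^d) (kernel_matrix d (grid_point_set m)) (\<lambda>_. 1 / real (m^d)) =
      (1/3 + 1 / (6 * (real m)\<^sup>2))^d"
proof -
  have "quad_form (m^d) (kernel_matrix d (grid_point_set m)) (\<lambda>_. 1 / real (m^d)) =
      (1 / real (m^d))\<^sup>2 * (\<Sum>j<m^d. \<Sum>k<m^d. \<Prod>i<d.
        (\<lambda>a b. kernel_per (real a / real m) (real b / real m)) (j div m^i mod m) (k div m^i mod m))"
    unfolding quad_form_def kernel_matrix_def grid_point_set_def
    by (simp add: sum_distrib_left power2_eq_square)
  also have "\<dots> = (1 / real (m^d))\<^sup>2 * (\<Sum>a<m. \<Sum>b<m. kernel_per (real a / real m) (real b / real m))^d"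
    using sum_digits_prod[OF m, of "\<lambda>a b. kernel_per (real a / real m) (real b / real m)"]
    by (simp only:)
  also have "\<dots> = ((real m)\<^sup>2 / 3 + 1/6)^d / ((real m)\<^sup>2)^d"
    by (simp add: sum_kernel_per_grid[OF m] power2_eq_square power_mult_distrib)
  also have "\<dots> = (((real m)\<^sup>2 / 3 + 1/6) / (real m)\<^sup>2)^d"
    by (rule power_divide[symmetric])
  also have "((real m)\<^sup>2 / 3 + 1/6) / (real m)\<^sup>2 = 1/3 + 1 / (6 * (real m)\<^sup>2)"
    using m by (simp add: field_simps)
  finally show ?thesis .
qed

lemma exists_point_set_L2per_le:
  assumes e: "0 < e"
  shows "\<exists>N P. 0 < N \<and> point_set_in d N P \<and> L2per d N P (\<lambda>_. 1 / real N) \<le> e * 3 powr (- real d / 2)"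
proof -
  have "(\<lambda>m::nat. (1 + 1 / (2 * (real m)\<^sup>2))^d) \<longlonglongrightarrow> 1"
    by real_asymp
  then have "eventually (\<lambda>m::nat. (1 + 1 / (2 * (real m)\<^sup>2))^d < 1 + e\<^sup>2) sequentially"
    using e by (intro order_tendstoD(2)) auto
  then obtain M where M: "\<And>m. M \<le> m \<Longrightarrow> (1 + 1 / (2 * (real m)\<^sup>2))^d < 1 + e\<^sup>2"
    unfolding eventually_sequentially by blast
  define m where "m = Suc M"
  have m: "0 < m" and small: "(1 + 1 / (2 * (real m)\<^sup>2))^d \<le> 1 + e\<^sup>2"
    using M[of m] by (simp_all add: m_def)
  have "1/3 + 1 / (6 * (real m)\<^sup>2) = (1 + 1 / (2 * (real m)\<^sup>2)) / 3"
    by (simp add: field_simps)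
  then have power_eq: "(1/3 + 1 / (6 * (real m)\<^sup>2))^d = (1 + 1 / (2 * (real m)\<^sup>2))^d / 3^d"
    by (metis power_divide)
  have "(L2per d (m^d) (grid_point_set m) (\<lambda>_. 1 / real (m^d)))\<^sup>2 =
      quad_form (m^d) (kernel_matrix d (grid_point_set m)) (\<lambda>_. 1 / real (m^d))
      - 2 * (\<Sum>j<m^d. 1 / real (m^d)) / 3^d + 1 / 3^d"
    by (rule L2per_sq[OF point_set_in_grid[OF m]])
  also have "\<dots> = ((1 + 1 / (2 * (real m)\<^sup>2))^d - 1) / 3^d"
    unfolding quad_form_grid[OF m] power_eq using m by (simp add: diff_divide_distrib)
  also have "\<dots> \<le> e\<^sup>2 / 3^d"
    using small by (simp add: divide_right_mono)
  finally have "L2per d (m^d) (grid_point_set m) (\<lambda>_. 1 / real (m^d)) \<le> e * 3 powr (- real d / 2)"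
    using L2per_le_iff[of e d "m^d" "grid_point_set m" "\<lambda>_. 1 / real (m^d)"] e by simp
  then show ?thesis
    using m point_set_in_grid[OF m] by (intro exI[of _ "m^d"] exI[of _ "grid_point_set m"]) simp
qed

lemma N2per_lower_bound:
  assumes "0 < e"
  shows "1 / (1 + e\<^sup>2) * (3/2)^d \<le> real (N2per e d)"
proof -
  obtain N P where "0 < N" "point_set_in d N P" "L2per d N P (\<lambda>_. 1 / real N) \<le> e * 3 powr (- real d / 2)"
    using exists_point_set_L2per_le[OF assms] by blast
  then have "\<exists>N. 1 \<le> N \<and> (\<exists>P. point_set_in d N P \<and>
      L2per d N P (\<lambda>_. 1 / real N) \<le> e * 3 powr (- real d / 2))"
    by (intro exI[of _ N]) auto
  from LeastI_ex[OF this] obtain P where "1 \<le> N2per e d" "point_set_in d (N2per e d) P"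
    "L2per d (N2per e d) P (\<lambda>_. 1 / real (N2per e d)) \<le> e * 3 powr (- real d / 2)"
    unfolding N2per_def[symmetric] by blast
  then show ?thesis
    using assms by (intro card_ge_equal_weights) auto
qed

lemma N2per_wpos_lower_bound:
  assumes "0 < e"
  shows "(1 - e\<^sup>2) * (3/2)^d \<le> real (N2per_wpos e d)"
proof -
  obtain N P where "0 < N" "point_set_in d N P" "L2per d N P (\<lambda>_. 1 / real N) \<le> e * 3 powr (- real d / 2)"
    using exists_point_set_L2per_le[OF assms] by blast
  then have "\<exists>N. 1 \<le> N \<and> (\<exists>P w. point_set_in d N P \<and> (\<forall>j<N. 0 < w j) \<and>
      L2per d N P w \<le> e * 3 powr (- real d / 2))"
    by (intro exI[of _ N] conjI exI[of _ P] exI[of _ "\<lambda>_. 1 / real N"]) auto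
  from LeastI_ex[OF this] obtain P w where "1 \<le> N2per_wpos e d" "point_set_in d (N2per_wpos e d) P"
    "\<forall>j<N2per_wpos e d. 0 < w j" "L2per d (N2per_wpos e d) P w \<le> e * 3 powr (- real d / 2)"
    unfolding N2per_wpos_def[symmetric] by blast
  then show ?thesis
    using assms by (intro card_ge_positive_weights) auto
qed

lemma N2per_w_lower_bound:
  assumes "0 < e"
  shows "(1 - e\<^sup>2) * (2883/2500)^d \<le> real (N2per_w e d)"
proof -
  obtain N P where "0 < N" "point_set_in d N P" "L2per d N P (\<lambda>_. 1 / real N) \<le> e * 3 powr (- real d / 2)"
    using exists_point_set_L2per_le[OF assms] by blast
  then have "\<exists>N. 1 \<le> N \<and> (\<exists>P w. point_set_in d N P \<and> L2per d N P w \<le> e * 3 powr (- real d / 2))"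
    by (intro exI[of _ N]) auto
  from LeastI_ex[OF this] obtain P w where "1 \<le> N2per_w e d" "point_set_in d (N2per_w e d) P"
    "L2per d (N2per_w e d) P w \<le> e * 3 powr (- real d / 2)"
    unfolding N2per_w_def[symmetric] by blast
  then show ?thesis
    using assms by (intro card_ge_real_weights) auto
qed

theorem theorem2:
  shows "(\<forall>(\<epsilon>::real) (d::nat). 0 < \<epsilon> \<and> \<epsilon> < 1 \<and> 1 \<le> d \<longrightarrow>
            real (N2per \<epsilon> d) \<ge> 1 / (1 + \<epsilon>\<^sup>2) * (3/2) ^ d \<and>
            real (N2per_wpos \<epsilon> d) \<ge> (1 - \<epsilon>\<^sup>2) * (3/2) ^ d)
       \<and> (\<forall>\<epsilon>0::real. 0 < \<epsilon>0 \<and> \<epsilon>0 < 1 \<longrightarrow>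
            (\<exists>c::real. c > 0 \<and> (\<forall>(d::nat) (\<epsilon>::real). 1 \<le> d \<and> 0 < \<epsilon> \<and> \<epsilon> < \<epsilon>0 \<longrightarrow>
                real (N2per_w \<epsilon> d) \<ge> c * 1.0628 ^ d)))"
proof (intro conjI allI impI)
  fix \<epsilon> :: real and d :: nat
  assume "0 < \<epsilon> \<and> \<epsilon> < 1 \<and> 1 \<le> d"
  then have "0 < \<epsilon>" by simp
  then show "real (N2per \<epsilon> d) \<ge> 1 / (1 + \<epsilon>\<^sup>2) * (3/2) ^ d"
    and "real (N2per_wpos \<epsilon> d) \<ge> (1 - \<epsilon>\<^sup>2) * (3/2) ^ d"
    by (rule N2per_lower_bound, rule N2per_wpos_lower_bound)
next
  fix \<epsilon>0 :: real
  assume \<epsilon>0: "0 < \<epsilon>0 \<and> \<epsilon>0 < 1"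
  show "\<exists>c::real. c > 0 \<and> (\<forall>(d::nat) (\<epsilon>::real). 1 \<le> d \<and> 0 < \<epsilon> \<and> \<epsilon> < \<epsilon>0 \<longrightarrow>
      real (N2per_w \<epsilon> d) \<ge> c * 1.0628 ^ d)"
  proof (intro exI[of _ "1 - \<epsilon>0\<^sup>2"] conjI allI impI)
    show "0 < 1 - \<epsilon>0\<^sup>2"
      using \<epsilon>0 by (simp add: power_less_one_iff abs_less_iff)
    fix d :: nat and \<epsilon> :: real
    assume "1 \<le> d \<and> 0 < \<epsilon> \<and> \<epsilon> < \<epsilon>0"
    then have "(1 - \<epsilon>0\<^sup>2) * 1.0628 ^ d \<le> (1 - \<epsilon>\<^sup>2) * (2883/2500)^d"
      using \<epsilon>0 by (intro mult_mono power_mono) (auto simp: power_le_one abs_le_iff)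
    also have "\<dots> \<le> real (N2per_w \<epsilon> d)"
      using \<open>1 \<le> d \<and> 0 < \<epsilon> \<and> \<epsilon> < \<epsilon>0\<close> by (intro N2per_w_lower_bound) simp
    finally show "(1 - \<epsilon>0\<^sup>2) * 1.0628 ^ d \<le> real (N2per_w \<epsilon> d)" .
  qed
qed

end
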